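(* Let $N\geq1$ and $\varepsilon>0$. Let $a\in C(\mathbb{R}^N)$ and let $J\in L^1(\mathbb{R}^N)$ be nonnegative, radially symmetric, with $\int_{\mathbb{R}^N}J=1$; set $J_\varepsilon(z)=\varepsilon^{-N}J(z/\varepsilon)$. Suppose $u_\varepsilon\in L^\infty(\mathbb{R}^N)$ is nonnegative, not a.e. zero, and satisfies $$J_\varepsilon\ast u_\varepsilon-u_\varepsilon+u_\varepsilon(a-u_\varepsilon)=0\quad\text{a.e. in }\mathbb{R}^N.$$ Then $u_\varepsilon(x)>(a(x)-1)^+$ for a.e. $x\in\mathbb{R}^N$.
   Context: $(J_\varepsilon\ast u)(x)=\int_{\mathbb{R}^N}J_\varepsilon(x-y)u(y)\,\mathrm{d}y$; $f^+=\max\{0,f\}$. (This is the case $m=0$ of the equation $\varepsilon^{-m}(J_\varepsilon\ast u-u)+u(a-u)=0$.) *)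

theory Defs
  imports "HOL-Analysis.Analysis"
begin

definition rescaled_kernel :: "real \<Rightarrow> ('a::euclidean_space \<Rightarrow> real) \<Rightarrow> 'a \<Rightarrow> real" where
  "rescaled_kernel \<epsilon> J z = J ((1 / \<epsilon>) *\<^sub>R z) / \<epsilon> ^ DIM('a)"

definition conv :: "('a::euclidean_space \<Rightarrow> real) \<Rightarrow> ('a \<Rightarrow> real) \<Rightarrow> 'a \<Rightarrow> real" where
  "conv J u x = (LINT y|lebesgue. J (x - y) * u y)"

end

theory Submission
  imports Defs
begin

text \<open>Put \<open>k = J\<^sub>\<epsilon>\<close>. The equation says \<open>u (1 - a + u) = k * u \<ge> 0\<close>. Wherever \<open>u\<close> vanishes,
  so does \<open>k * u\<close>, hence \<open>u\<close> vanishes a.e. on \<open>x - {k \<noteq> 0}\<close>; as \<open>k\<close> is even, the zero set of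
  \<open>u\<close> is invariant (up to null sets) under almost every translation by an element of \<open>{k \<noteq> 0}\<close>.
  The translations leaving a set invariant up to null sets form a group; by Steinhaus' theorem
  it contains a ball as soon as it contains a set of positive measure, so it is all of \<open>\<real>\<^sup>N\<close>
  and the zero set of \<open>u\<close> is null or conull. As \<open>u\<close> is not a.e. zero, \<open>u > 0\<close> a.e.; then
  \<open>k * u > 0\<close> everywhere, and \<open>u (1 - a + u) > 0\<close> gives \<open>u > max 0 (a - 1)\<close>.\<close>

lemma AE_lborel_affine:
  fixes t :: "'a::euclidean_space"
  assumes c: "c \<noteq> 0" and P: "AE x in lborel. P x"
  shows "AE x in lborel. P (t + c *\<^sub>R x)"
proof -
  obtain N where N: "N \<in> null_sets lborel" "{x. \<not> P x} \<subseteq> N"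
    using P unfolding eventually_ae_filter by auto
  have "emeasure lborel N = ennreal (\<bar>c\<bar> ^ DIM('a)) * emeasure lborel ((\<lambda>x. t + c *\<^sub>R x) -` N)"
    using null_setsD2[OF N(1)] by (subst lborel_affine[OF c, of t])
      (simp add: emeasure_density emeasure_distr nn_integral_cmult_indicator)
  moreover have "(\<lambda>x. t + c *\<^sub>R x) -` N \<in> sets borel"
    using measurable_sets[of "\<lambda>x. t + c *\<^sub>R x" borel borel N] N(1) by auto
  ultimately have "(\<lambda>x. t + c *\<^sub>R x) -` N \<in> null_sets lborel"
    using N(1) c by (auto simp: null_sets_def)
  then show ?thesis
    by (rule AE_I') (use N(2) in auto)
qed

lemma AE_lborel_reflect:
  fixes x :: "'a::euclidean_space"
  assumes "AE y in lborel. P y"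
  shows "AE y in lborel. P (x - y)"
  using AE_lborel_affine[of "-1" P x] assms by simp

lemma integrable_lborel_affine:
  fixes t :: "'a::euclidean_space" and f :: "'a \<Rightarrow> real"
  assumes c: "c \<noteq> 0" and f: "integrable lborel f"
  shows "integrable lborel (\<lambda>x. f (t + c *\<^sub>R x))"
proof -
  have [measurable]: "f \<in> borel_measurable borel"
    using f by auto
  have "(\<integral>\<^sup>+x. ennreal (norm (f x)) \<partial>lborel)
      = ennreal (\<bar>c\<bar> ^ DIM('a)) * (\<integral>\<^sup>+x. ennreal (norm (f (t + c *\<^sub>R x))) \<partial>lborel)"
    by (subst lborel_affine[OF c, of t]) (simp add: nn_integral_density nn_integral_distr nn_integral_cmult)
  with f c show ?thesis
    by (auto simp: integrable_iff_bounded ennreal_mult_less_top)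
qed

lemma AE_lborel_ex:
  assumes "AE x in (lborel :: 'a::euclidean_space measure). P x"
  shows "\<exists>x. P x"
  using assms by (intro eventually_happens') (simp_all add: ae_filter_eq_bot_iff)

lemma lebesgue_compact_open_approx:
  fixes E :: "'a::euclidean_space set"
  assumes E: "E \<in> sets lebesgue" "bounded E" "measure lebesgue E > 0"
  obtains F U where "compact F" "open U" "F \<subseteq> E" "E \<subseteq> U" "U - E \<in> lmeasurable"
    "measure lebesgue (U - E) < measure lebesgue F"
proof -
  define m where "m = measure lebesgue E"
  have m: "m > 0"
    using E(3) by (simp add: m_def)
  obtain U where U: "open U" "E \<subseteq> U" "U - E \<in> lmeasurable" "emeasure lebesgue (U - E) < ennreal (m/2)"
    using sets_lebesgue_outer_open[OF E(1), of "m/2"] m by auto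
  obtain F where F: "closed F" "F \<subseteq> E" "E - F \<in> lmeasurable" "emeasure lebesgue (E - F) < ennreal (m/2)"
    using sets_lebesgue_inner_closed[OF E(1), of "m/2"] m by auto
  have "compact F"
    using F(1,2) E(2) by (meson bounded_subset compact_eq_bounded_closed)
  have "E \<in> lmeasurable"
    using E(1,2) by (simp add: bounded_set_imp_lmeasurable)
  then have "m \<le> measure lebesgue (F \<union> (E - F))"
    using F(2) unfolding m_def by (simp add: Un_absorb1)
  also have "\<dots> \<le> measure lebesgue F + measure lebesgue (E - F)"
    using \<open>compact F\<close> F(3) by (intro measure_Un_le) (simp_all add: fmeasurableD lmeasurable_compact)
  finally have "m \<le> measure lebesgue F + measure lebesgue (E - F)" .
  moreover have "measure lebesgue (E - F) < m/2" "measure lebesgue (U - E) < m/2"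
    using F(3,4) U(3,4) m by (simp_all add: emeasure_eq_measure2 ennreal_less_iff)
  ultimately show thesis
    using that[OF \<open>compact F\<close> U(1) F(2) U(2,3)] by linarith
qed

lemma steinhaus_bounded:
  fixes E :: "'a::euclidean_space set"
  assumes E: "E \<in> sets lebesgue" "bounded E" "measure lebesgue E > 0"
  shows "\<exists>r>0. ball 0 r \<subseteq> {x - y | x y. x \<in> E \<and> y \<in> E}"
proof -
  obtain F U where FU: "compact F" "open U" "F \<subseteq> E" "E \<subseteq> U" "U - E \<in> lmeasurable"
    "measure lebesgue (U - E) < measure lebesgue F"
    using lebesgue_compact_open_approx[OF E] .
  obtain r where r: "r > 0" "(\<Union>x\<in>F. ball x r) \<subseteq> U"
    using compact_subset_open_imp_ball_epsilon_subset[OF FU(1,2)] FU(3,4) by blast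
  have "v \<in> {x - y | x y. x \<in> E \<and> y \<in> E}" if v: "v \<in> ball 0 r" for v
  proof (rule ccontr)
    assume no: "v \<notin> {x - y | x y. x \<in> E \<and> y \<in> E}"
    \<comment> \<open>then \<open>v + F\<close> lies in \<open>U - E\<close>, which is too small to contain a translate of \<open>F\<close>\<close>
    have "(+) v ` F \<subseteq> U - E"
    proof safe
      fix f assume "f \<in> F"
      have "v + f \<in> ball f r"
        using v by (simp add: dist_norm)
      with \<open>f \<in> F\<close> r(2) show "v + f \<in> U"
        by blast
      have "v = (v + f) - f"
        by simp
      then show "v + f \<in> E \<Longrightarrow> False"
        using no \<open>f \<in> F\<close> FU(3) by blast
    qed
    moreover have "(+) v ` F \<in> lmeasurable"
      using FU(1) by (intro measurable_translation lmeasurable_compact)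
    ultimately have "measure lebesgue ((+) v ` F) \<le> measure lebesgue (U - E)"
      using FU(5) by (intro measure_mono_fmeasurable) (simp_all add: fmeasurableD)
    with FU(6) show False
      by (simp add: measure_translation)
  qed
  with r(1) show ?thesis
    by blast
qed

theorem steinhaus:
  fixes E :: "'a::euclidean_space set"
  assumes E: "E \<in> sets lebesgue" "emeasure lebesgue E \<noteq> 0"
  shows "\<exists>r>0. ball 0 r \<subseteq> {x - y | x y. x \<in> E \<and> y \<in> E}"
proof -
  obtain n :: nat where n: "emeasure lebesgue (E \<inter> ball 0 n) \<noteq> 0"
  proof (rule ccontr)
    assume "\<not> thesis"
    then have "(\<Union>n::nat. E \<inter> ball 0 n) \<in> null_sets lebesgue"
      using that E(1) by (intro null_sets_UN) (auto simp: null_sets_def)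
    moreover have "(\<Union>n::nat. E \<inter> ball 0 n) = E"
      by (auto simp: dist_norm intro: reals_Archimedean2)
    ultimately show False
      using E(2) by auto
  qed
  have "E \<inter> ball 0 n \<in> lmeasurable"
    using E(1) by (intro bounded_set_imp_lmeasurable) auto
  then have "measure lebesgue (E \<inter> ball 0 n) > 0"
    using n by (simp add: emeasure_eq_measure2 zero_less_measure_iff)
  then have "\<exists>r>0. ball 0 r \<subseteq> {x - y | x y. x \<in> E \<inter> ball 0 n \<and> y \<in> E \<inter> ball 0 n}"
    using E(1) by (intro steinhaus_bounded) auto
  then show ?thesis
    by blast
qed

definition ae_translation_invariant :: "('a::euclidean_space \<Rightarrow> bool) \<Rightarrow> 'a \<Rightarrow> bool" where
  "ae_translation_invariant Z z \<longleftrightarrow> (AE x in lborel. Z x \<longleftrightarrow> Z (x - z))"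

lemma ae_translation_invariant_add:
  assumes s: "ae_translation_invariant Z s" and t: "ae_translation_invariant Z t"
  shows "ae_translation_invariant Z (s + t)"
proof -
  have "AE x in lborel. Z (- s + 1 *\<^sub>R x) \<longleftrightarrow> Z (- s + 1 *\<^sub>R x - t)"
    using t unfolding ae_translation_invariant_def by (rule AE_lborel_affine[rotated]) simp
  with s show ?thesis
    unfolding ae_translation_invariant_def by eventually_elim (simp add: algebra_simps)
qed

lemma ae_translation_invariant_uminus:
  assumes "ae_translation_invariant Z t"
  shows "ae_translation_invariant Z (- t)"
proof -
  have "AE x in lborel. Z (t + 1 *\<^sub>R x) \<longleftrightarrow> Z (t + 1 *\<^sub>R x - t)"
    using assms unfolding ae_translation_invariant_def by (rule AE_lborel_affine[rotated]) simp
  then show ?thesis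
    unfolding ae_translation_invariant_def by eventually_elim (simp add: algebra_simps)
qed

lemma ae_translation_invariant_diff:
  "ae_translation_invariant Z s \<Longrightarrow> ae_translation_invariant Z t \<Longrightarrow> ae_translation_invariant Z (s - t)"
  using ae_translation_invariant_add[of Z s "- t"] ae_translation_invariant_uminus[of Z t] by simp

lemma ae_translation_invariant_scaleR_of_nat:
  assumes "ae_translation_invariant Z t"
  shows "ae_translation_invariant Z (real n *\<^sub>R t)"
proof (induction n)
  case 0
  then show ?case
    by (simp add: ae_translation_invariant_def)
next
  case (Suc n)
  then show ?case
    using ae_translation_invariant_add[OF Suc assms] by (simp add: algebra_simps)
qed

lemma ae_translation_invariant_if_ball:
  assumes r: "r > 0" and ball: "\<And>v. v \<in> ball 0 r \<Longrightarrow> ae_translation_invariant Z v"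
  shows "ae_translation_invariant Z z"
proof -
  obtain n :: nat where n: "norm z / r < real n"
    using reals_Archimedean2 by blast
  then have "real n > 0"
    using r by (metis divide_nonneg_pos norm_ge_zero order_le_less_trans)
  then have "(1 / real n) *\<^sub>R z \<in> ball 0 r"
    using n r by (simp add: divide_less_eq mult.commute)
  from ae_translation_invariant_scaleR_of_nat[OF ball[OF this], of n] \<open>real n > 0\<close>
  show ?thesis
    by simp
qed

lemma ae_translation_invariant_if_positive_measure:
  assumes E: "E \<in> sets lebesgue" "emeasure lebesgue E \<noteq> 0"
    and inv: "AE z in lebesgue. z \<in> E \<longrightarrow> ae_translation_invariant Z z"
  shows "ae_translation_invariant Z z"
proof -
  obtain N where N: "N \<in> null_sets lebesgue" "{z. \<not> (z \<in> E \<longrightarrow> ae_translation_invariant Z z)} \<subseteq> N"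
    using inv unfolding eventually_ae_filter by auto
  have "emeasure lebesgue (E - N) \<noteq> 0"
    using E N(1) by (simp add: emeasure_Diff_null_set)
  moreover have "E - N \<in> sets lebesgue"
    using E(1) N(1) by auto
  ultimately obtain r where r: "r > 0" "ball 0 r \<subseteq> {x - y | x y. x \<in> E - N \<and> y \<in> E - N}"
    using steinhaus by blast
  have "ae_translation_invariant Z v" if "v \<in> ball 0 r" for v
    using that r(2) N(2) by (force intro: ae_translation_invariant_diff)
  with r(1) show ?thesis
    by (rule ae_translation_invariant_if_ball)
qed

lemma AE_or_AE_not_if_ae_translation_invariant:
  assumes [measurable]: "Measurable.pred borel Z"
    and inv: "\<And>z. ae_translation_invariant Z z"
  shows "(AE x in lborel. Z x) \<or> (AE x in lborel. \<not> Z x)"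
proof -
  have "AE z in lborel. AE x in lborel. Z x \<longleftrightarrow> Z (x - z)"
    using inv unfolding ae_translation_invariant_def by simp
  then have "AE x in lborel. AE z in lborel. Z x \<longleftrightarrow> Z (x - z)"
    by (subst lborel_pair.AE_commute) measurable
  then have "AE x in lborel. AE y in lborel. Z x \<longleftrightarrow> Z y"
  proof eventually_elim
    case (elim x)
    from AE_lborel_reflect[OF elim, of x] show ?case
      by simp
  qed
  then obtain x0 where "AE y in lborel. Z x0 \<longleftrightarrow> Z y"
    using AE_lborel_ex by blast
  then show ?thesis
    by (cases "Z x0") (auto elim: AE_mp)
qed

lemma AE_AE_zero_iff_if_kernel_annihilates:
  fixes k v :: "'a::euclidean_space \<Rightarrow> real"
  assumes [measurable]: "k \<in> borel_measurable borel" "v \<in> borel_measurable borel"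
    and k_even: "AE z in lborel. k (- z) = k z"
    and annihilate: "AE x in lborel. v x = 0 \<longrightarrow> (AE y in lborel. k (x - y) * v y = 0)"
  shows "AE x in lborel. AE y in lborel. k (x - y) \<noteq> 0 \<longrightarrow> (v x = 0 \<longleftrightarrow> v y = 0)"
proof -
  have one_sided: "AE x in lborel. AE y in lborel. v x = 0 \<longrightarrow> k (x - y) * v y = 0"
    using annihilate
  proof eventually_elim
    case (elim x)
    then show ?case
      by (cases "v x = 0") simp_all
  qed
  then have "AE y in lborel. AE x in lborel. v x = 0 \<longrightarrow> k (x - y) * v y = 0"
    by (subst (asm) lborel_pair.AE_commute) measurable
  with one_sided show ?thesis
  proof eventually_elim
    case (elim x)
    with AE_lborel_reflect[OF k_even, of x] show ?case
      by eventually_elim (auto simp: minus_diff_eq)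
  qed
qed

lemma AE_eq_0_or_AE_neq_0_if_kernel_annihilates:
  fixes k v :: "'a::euclidean_space \<Rightarrow> real"
  assumes [measurable]: "k \<in> borel_measurable borel" "v \<in> borel_measurable borel"
    and k_even: "AE z in lborel. k (- z) = k z"
    and k_nonzero: "\<not> (AE z in lborel. k z = 0)"
    and annihilate: "AE x in lborel. v x = 0 \<longrightarrow> (AE y in lborel. k (x - y) * v y = 0)"
  shows "(AE x in lborel. v x = 0) \<or> (AE x in lborel. v x \<noteq> 0)"
proof -
  define Z where "Z x \<longleftrightarrow> v x = 0" for x
  have [measurable]: "Measurable.pred borel Z"
    unfolding Z_def by measurable
  have "AE x in lborel. AE z in lborel. k z \<noteq> 0 \<longrightarrow> (Z x \<longleftrightarrow> Z (x - z))"
    using AE_AE_zero_iff_if_kernel_annihilates[OF assms(1,2) k_even annihilate]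
  proof eventually_elim
    case (elim x)
    from AE_lborel_reflect[OF elim, of x] show ?case
      by (simp add: Z_def)
  qed
  then have "AE z in lborel. AE x in lborel. k z \<noteq> 0 \<longrightarrow> (Z x \<longleftrightarrow> Z (x - z))"
    by (subst (asm) lborel_pair.AE_commute) measurable
  then have "AE z in lborel. z \<in> {z. k z \<noteq> 0} \<longrightarrow> ae_translation_invariant Z z"
    unfolding ae_translation_invariant_def by eventually_elim auto
  moreover have "{z. k z \<noteq> 0} \<in> sets borel"
    by measurable
  moreover have "emeasure lborel {z. k z \<noteq> 0} \<noteq> 0"
    using k_nonzero AE_iff_measurable[of "{z. k z \<noteq> 0}" lborel "\<lambda>z. k z = 0"] by auto
  ultimately have "ae_translation_invariant Z z" for z
    by (intro ae_translation_invariant_if_positive_measure[of "{z. k z \<noteq> 0}"])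
      (auto simp: AE_completion_iff)
  then show ?thesis
    using AE_or_AE_not_if_ae_translation_invariant[of Z] by (simp add: Z_def)
qed

lemma conv_eq_lborel_integral:
  assumes [measurable]: "k \<in> borel_measurable borel" "v \<in> borel_measurable borel"
  shows "conv k v x = (\<integral>y. k (x - y) * v y \<partial>lborel)"
  unfolding conv_def by (rule integral_completion) measurable

lemma integrable_conv_integrand:
  fixes k v :: "'a::euclidean_space \<Rightarrow> real"
  assumes k: "integrable lborel k" and [measurable]: "v \<in> borel_measurable borel"
    and v_bounded: "AE y in lborel. \<bar>v y\<bar> \<le> C"
  shows "integrable lborel (\<lambda>y. k (x - y) * v y)"
proof -
  have [measurable]: "k \<in> borel_measurable borel"
    using k by auto
  have "integrable lborel (\<lambda>y. k (x + (- 1) *\<^sub>R y))"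
    using k by (rule integrable_lborel_affine[rotated]) simp
  then have "integrable lborel (\<lambda>y. C * k (x - y))"
    by simp
  then show ?thesis
  proof (rule Bochner_Integration.integrable_bound)
    show "AE y in lborel. norm (k (x - y) * v y) \<le> norm (C * k (x - y))"
      using v_bounded
    proof eventually_elim
      case (elim y)
      then have "\<bar>k (x - y)\<bar> * \<bar>v y\<bar> \<le> \<bar>k (x - y)\<bar> * \<bar>C\<bar>"
        by (intro mult_left_mono) auto
      then show ?case
        by (simp add: abs_mult mult.commute)
    qed
  qed measurable
qed

lemma conv_nonneg:
  assumes "\<And>z. k z \<ge> 0" "\<And>y. v y \<ge> 0"
  shows "conv k v x \<ge> 0"
  unfolding conv_def using assms by (simp add: Bochner_Integration.integral_nonneg)

lemma conv_eq_0_iff_AE: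
  assumes [measurable]: "k \<in> borel_measurable borel" "v \<in> borel_measurable borel"
    and "\<And>z. k z \<ge> 0" "\<And>y. v y \<ge> 0"
    and "integrable lborel (\<lambda>y. k (x - y) * v y)"
  shows "conv k v x = 0 \<longleftrightarrow> (AE y in lborel. k (x - y) * v y = 0)"
  using assms by (simp add: conv_eq_lborel_integral integral_nonneg_eq_0_iff_AE)

lemma conv_pos:
  fixes k v :: "'a::euclidean_space \<Rightarrow> real"
  assumes [measurable]: "k \<in> borel_measurable borel" "v \<in> borel_measurable borel"
    and k_nonneg: "\<And>z. k z \<ge> 0" and k_nonzero: "\<not> (AE z in lborel. k z = 0)"
    and v_nonneg: "\<And>y. v y \<ge> 0" and v_pos: "AE y in lborel. v y > 0"
    and "integrable lborel (\<lambda>y. k (x - y) * v y)"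
  shows "conv k v x > 0"
proof -
  have "conv k v x \<noteq> 0"
  proof
    assume "conv k v x = 0"
    then have "AE y in lborel. k (x - y) * v y = 0"
      using assms by (simp add: conv_eq_0_iff_AE)
    with v_pos have "AE y in lborel. k (x - y) = 0"
      by eventually_elim simp
    from AE_lborel_reflect[OF this, of x] k_nonzero show False
      by simp
  qed
  with conv_nonneg[of k v x] k_nonneg v_nonneg show ?thesis
    by fastforce
qed

lemma nonlocal_logistic_solution_gt_borel:
  fixes k v a :: "'a::euclidean_space \<Rightarrow> real"
  assumes [measurable]: "k \<in> borel_measurable borel" "v \<in> borel_measurable borel"
    and k_int: "integrable lborel k" and k_nonneg: "\<And>z. k z \<ge> 0"
    and k_even: "AE z in lborel. k (- z) = k z" and k_nonzero: "\<not> (AE z in lborel. k z = 0)"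
    and v_nonneg: "\<And>x. v x \<ge> 0" and v_bounded: "AE x in lborel. \<bar>v x\<bar> \<le> C"
    and v_nonzero: "\<not> (AE x in lborel. v x = 0)"
    and eq: "AE x in lborel. conv k v x - v x + v x * (a x - v x) = 0"
  shows "AE x in lborel. v x > max 0 (a x - 1)"
proof -
  have int: "integrable lborel (\<lambda>y. k (x - y) * v y)" for x
    using integrable_conv_integrand[OF k_int _ v_bounded] by simp
  have "AE x in lborel. v x = 0 \<longrightarrow> (AE y in lborel. k (x - y) * v y = 0)"
    using eq
  proof eventually_elim
    case (elim x)
    then show ?case
      using conv_eq_0_iff_AE[OF assms(1,2) k_nonneg v_nonneg int, of x] by auto
  qed
  then have "AE x in lborel. v x \<noteq> 0"
    using AE_eq_0_or_AE_neq_0_if_kernel_annihilates[of k v] k_even k_nonzero v_nonzero by auto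
  then have v_pos: "AE x in lborel. v x > 0"
    by eventually_elim (simp add: v_nonneg order_less_le)
  have conv_pos: "conv k v x > 0" for x
    using k_nonneg k_nonzero v_nonneg v_pos int by (intro conv_pos) measurable
  show ?thesis
    using eq v_pos
  proof eventually_elim
    case (elim x)
    then have "v x * (1 - a x + v x) > 0"
      using conv_pos[of x] by (simp add: algebra_simps)
    with elim(2) show ?case
      by (simp add: zero_less_mult_iff)
  qed
qed

lemma completion_ex_borel_measurable_nonneg:
  fixes f :: "'a \<Rightarrow> real"
  assumes "f \<in> borel_measurable (completion M)" and "AE x in M. f x \<ge> 0"
  obtains g where "g \<in> borel_measurable M" "\<And>x. g x \<ge> 0" "AE x in M. f x = g x"
proof -
  obtain g where g: "g \<in> borel_measurable M" "AE x in M. f x = g x"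
    using completion_ex_borel_measurable_real[OF assms(1)] by blast
  show thesis
  proof
    show "(\<lambda>x. max 0 (g x)) \<in> borel_measurable M"
      using g(1) by measurable
    show "AE x in M. f x = max 0 (g x)"
      using g(2) assms(2) by eventually_elim simp
  qed simp
qed

lemma borel_measurable_rescaled_kernel [measurable]:
  assumes [measurable]: "J \<in> borel_measurable borel"
  shows "rescaled_kernel \<epsilon> J \<in> borel_measurable borel"
  unfolding rescaled_kernel_def[abs_def] by measurable

lemma rescaled_kernel_nonneg:
  "\<epsilon> > 0 \<Longrightarrow> (\<And>z. J z \<ge> 0) \<Longrightarrow> rescaled_kernel \<epsilon> J z \<ge> 0"
  by (simp add: rescaled_kernel_def)

lemma integrable_rescaled_kernel:
  fixes J :: "'a::euclidean_space \<Rightarrow> real"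
  assumes "\<epsilon> \<noteq> 0" "integrable lborel J"
  shows "integrable lborel (rescaled_kernel \<epsilon> J)"
  using integrable_lborel_affine[of "1 / \<epsilon>" J 0] assms by (simp add: rescaled_kernel_def[abs_def])

lemma AE_rescaled_kernel_cong:
  fixes J j :: "'a::euclidean_space \<Rightarrow> real"
  assumes "\<epsilon> \<noteq> 0" "AE z in lborel. J z = j z"
  shows "AE z in lborel. rescaled_kernel \<epsilon> J z = rescaled_kernel \<epsilon> j z"
  using AE_lborel_affine[of "1 / \<epsilon>" _ 0, OF _ assms(2)] assms(1) by (simp add: rescaled_kernel_def)

lemma AE_rescaled_kernel_eq_0_iff:
  fixes J :: "'a::euclidean_space \<Rightarrow> real"
  assumes "\<epsilon> \<noteq> 0"
  shows "(AE z in lborel. rescaled_kernel \<epsilon> J z = 0) \<longleftrightarrow> (AE z in lborel. J z = 0)"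
proof
  assume "AE z in lborel. rescaled_kernel \<epsilon> J z = 0"
  then have "AE z in lborel. J ((1 / \<epsilon>) *\<^sub>R z) = 0"
    using assms by (simp add: rescaled_kernel_def)
  from AE_lborel_affine[of \<epsilon> _ 0, OF assms this] assms show "AE z in lborel. J z = 0"
    by simp
next
  assume "AE z in lborel. J z = 0"
  from AE_lborel_affine[of "1 / \<epsilon>" _ 0, OF _ this] assms
  show "AE z in lborel. rescaled_kernel \<epsilon> J z = 0"
    by (simp add: rescaled_kernel_def)
qed

lemma conv_cong_AE:
  fixes K k u v :: "'a::euclidean_space \<Rightarrow> real"
  assumes [measurable]: "k \<in> borel_measurable borel" "v \<in> borel_measurable borel"
    and "AE z in lborel. K z = k z" "AE y in lborel. u y = v y"
  shows "conv K u x = conv k v x"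
proof -
  have "AE y in lborel. k (x - y) * v y = K (x - y) * u y"
    using AE_lborel_reflect[OF assms(3), of x] assms(4) by eventually_elim simp
  then have ae: "AE y in lebesgue. k (x - y) * v y = K (x - y) * u y"
    by (simp add: AE_completion_iff)
  have meas: "(\<lambda>y. k (x - y) * v y) \<in> borel_measurable lebesgue"
    by (intro measurable_completion) measurable
  show ?thesis
    unfolding conv_def using integral_cong_AE[OF meas borel_measurable_AE[OF meas ae] ae] by simp
qed

lemma rescaled_kernel_ex_borel_representative:
  fixes J :: "'a::euclidean_space \<Rightarrow> real"
  assumes eps: "\<epsilon> > 0" and J_int: "integrable lebesgue J" and J_nonneg: "\<And>z. J z \<ge> 0"
    and J_even: "\<And>z. J (- z) = J z" and J_nonzero: "\<not> (AE z in lebesgue. J z = 0)"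
  obtains k where "k \<in> borel_measurable borel" "integrable lborel k" "\<And>z. k z \<ge> 0"
    "AE z in lborel. k (- z) = k z" "\<not> (AE z in lborel. k z = 0)"
    "AE z in lborel. rescaled_kernel \<epsilon> J z = k z"
proof -
  obtain j where [measurable]: "j \<in> borel_measurable borel"
    and j_nonneg: "\<And>z. j z \<ge> 0" and Jj: "AE z in lborel. J z = j z"
    using completion_ex_borel_measurable_nonneg[of J lborel] J_int J_nonneg by auto
  have "integrable lebesgue j"
    using J_int by (rule integrable_cong_AE_imp)
      (use Jj in \<open>auto simp: AE_completion_iff intro: measurable_completion\<close>)
  then have "integrable lborel j"
    by (simp add: integrable_completion)
  have Kk: "AE z in lborel. rescaled_kernel \<epsilon> J z = rescaled_kernel \<epsilon> j z"
    using eps Jj by (intro AE_rescaled_kernel_cong) simp_all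
  show thesis
  proof (rule that)
    show "rescaled_kernel \<epsilon> j \<in> borel_measurable borel"
      by measurable
    show "rescaled_kernel \<epsilon> j z \<ge> 0" for z
      using eps j_nonneg by (rule rescaled_kernel_nonneg)
    show "integrable lborel (rescaled_kernel \<epsilon> j)"
      using eps \<open>integrable lborel j\<close> by (intro integrable_rescaled_kernel) simp_all
    show "AE z in lborel. rescaled_kernel \<epsilon> j (- z) = rescaled_kernel \<epsilon> j z"
      using AE_lborel_reflect[OF Kk, of 0] Kk
      by eventually_elim (use eps in \<open>auto simp: rescaled_kernel_def J_even\<close>)
    have "(AE z in lborel. J z = 0) \<longleftrightarrow> (AE z in lborel. j z = 0)"
      by (intro eventually_subst) (rule eventually_mono[OF Jj], simp)
    with J_nonzero have "\<not> (AE z in lborel. j z = 0)"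
      by (simp add: AE_completion_iff)
    then show "\<not> (AE z in lborel. rescaled_kernel \<epsilon> j z = 0)"
      using eps by (simp add: AE_rescaled_kernel_eq_0_iff)
  qed (fact Kk)
qed

theorem lemma2p2:
  fixes J u a :: "'a::euclidean_space \<Rightarrow> real" and \<epsilon> :: real
  assumes eps: "\<epsilon> > 0"
    and a_cont: "continuous_on UNIV a"
    and J_int: "integrable lebesgue J"
    and J_nonneg: "\<And>z. J z \<ge> 0"
    and J_radial: "\<And>z w. norm z = norm w \<Longrightarrow> J z = J w"
    and J_mass: "(LINT z|lebesgue. J z) = 1"
    and u_meas: "u \<in> borel_measurable lebesgue"
    and u_bdd: "\<exists>C. AE x in lebesgue. \<bar>u x\<bar> \<le> C"
    and u_nonneg: "AE x in lebesgue. u x \<ge> 0"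
    and u_nonzero: "\<not> (AE x in lebesgue. u x = 0)"
    and u_eq: "AE x in lebesgue.
                 conv (rescaled_kernel \<epsilon> J) u x - u x + u x * (a x - u x) = 0"
  shows "AE x in lebesgue. u x > max 0 (a x - 1)"
proof -
  \<comment> \<open>Borel representatives are needed for Fubini: \<open>(x, y) \<mapsto> u (x - y)\<close> need not be
    measurable for the product of two copies of the Lebesgue measure.\<close>
  have "\<not> (AE z in lebesgue. J z = 0)"
    using J_mass integral_eq_zero_AE[of J lebesgue] by auto
  then obtain k where k_meas: "k \<in> borel_measurable borel"
    and k_int: "integrable lborel k" and k_nonneg: "\<And>z. k z \<ge> 0"
    and k_even: "AE z in lborel. k (- z) = k z" and k_nonzero: "\<not> (AE z in lborel. k z = 0)"
    and Kk: "AE z in lborel. rescaled_kernel \<epsilon> J z = k z"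
    using rescaled_kernel_ex_borel_representative[OF eps J_int J_nonneg] J_radial[of "- _"] by auto
  obtain v where v_meas: "v \<in> borel_measurable borel"
    and v_nonneg: "\<And>x. v x \<ge> 0" and uv: "AE x in lborel. u x = v x"
    using completion_ex_borel_measurable_nonneg[of u lborel] u_meas u_nonneg
    by (auto simp: AE_completion_iff)
  obtain C where "AE x in lborel. \<bar>u x\<bar> \<le> C"
    using u_bdd by (auto simp: AE_completion_iff)
  with uv have v_bounded: "AE x in lborel. \<bar>v x\<bar> \<le> C"
    by eventually_elim simp
  have "(AE x in lborel. u x = 0) \<longleftrightarrow> (AE x in lborel. v x = 0)"
    by (intro eventually_subst) (rule eventually_mono[OF uv], simp)
  with u_nonzero have v_nonzero: "\<not> (AE x in lborel. v x = 0)"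
    by (simp add: AE_completion_iff)
  have conv_eq: "conv (rescaled_kernel \<epsilon> J) u x = conv k v x" for x
    using k_meas v_meas Kk uv by (rule conv_cong_AE)
  from u_eq uv have "AE x in lborel. conv k v x - v x + v x * (a x - v x) = 0"
    unfolding AE_completion_iff by eventually_elim (simp add: conv_eq)
  then have "AE x in lborel. v x > max 0 (a x - 1)"
    by (rule nonlocal_logistic_solution_gt_borel[OF k_meas v_meas k_int k_nonneg k_even k_nonzero
          v_nonneg v_bounded v_nonzero])
  with uv show ?thesis
    unfolding AE_completion_iff by eventually_elim simp
qed

end
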